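(* Let $\alpha\in[0,1]$ and let $F$ be the space of weakly increasing functions from $[0,1]$ to $[0,1]$, equipped with the uniform norm. The functional $\phi:F\to[0,1]$ given by \[ \phi(f)=\inf_{0\le x<1}\frac{1-f(x\alpha)}{1-x} \] is continuous at every $f\in F$ with $f(\alpha)<1$. *)

theory Defs
  imports "HOL-Analysis.Analysis"
begin

text \<open>The space F: weakly increasing functions from [0,1] to [0,1]
  (represented as real functions; only their values on [0,1] matter).\<close>
definition Fspace :: "(real \<Rightarrow> real) set" where
  "Fspace = {f. mono_on {0..1} f \<and> (\<forall>x\<in>{0..1}. f x \<in> {0..1})}"

definition udist :: "(real \<Rightarrow> real) \<Rightarrow> (real \<Rightarrow> real) \<Rightarrow> real" where
  "udist f g = (SUP x\<in>{0..1}. \<bar>f x - g x\<bar>)"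

definition phi :: "real \<Rightarrow> (real \<Rightarrow> real) \<Rightarrow> real" where
  "phi \<alpha> f = (INF x\<in>{0..<1}. (1 - f (x * \<alpha>)) / (1 - x))"

end

theory Submission
  imports Defs
begin

text \<open>Write \<open>c = 1 - f \<alpha>\<close>. By monotonicity every numerator \<open>1 - f (x\<alpha>)\<close> of the quotients
  defining \<open>phi \<alpha> f\<close> is at least \<open>c\<close>, and the same holds with \<open>c/2\<close> for every \<open>g\<close> within
  uniform distance \<open>c/2\<close> of \<open>f\<close>. If the numerators of \<open>h\<^sub>1\<close> are at least \<open>c\<close>, then for
  \<open>1 - x \<le> c\<close> the quotient of \<open>h\<^sub>1\<close> is at least \<open>1 \<ge> phi \<alpha> h\<^sub>2\<close>, while for \<open>1 - x > c\<close>
  the quotients of \<open>h\<^sub>1\<close> and \<open>h\<^sub>2\<close> differ by at most \<open>udist h\<^sub>1 h\<^sub>2 / c\<close>. Applying this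
  in both directions gives \<open>\<bar>phi \<alpha> g - phi \<alpha> f\<bar> \<le> 2 udist g f / c\<close>.\<close>

lemma mult_in_unit_interval:
  assumes "a \<in> {0..1}" "x \<in> {0..<(1::real)}"
  shows "x * a \<in> {0..1}" "x * a \<le> a"
  using assms by (auto simp: mult_le_one mult_left_le_one_le)

lemma Fspace_unit_interval:
  assumes "h \<in> Fspace" "y \<in> {0..1}"
  shows "0 \<le> h y" "h y \<le> 1"
  using assms by (auto simp: Fspace_def)

lemma abs_diff_le_udist:
  assumes "f \<in> Fspace" "g \<in> Fspace" "y \<in> {0..1}"
  shows "\<bar>g y - f y\<bar> \<le> udist g f"
proof -
  have "bdd_above ((\<lambda>x. \<bar>g x - f x\<bar>) ` {0..1})"
    by (rule bdd_aboveI2[where M = 1])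
       (use assms Fspace_unit_interval in \<open>fastforce simp: abs_le_iff\<close>)
  then show ?thesis
    unfolding udist_def by (rule cSUP_upper[OF assms(3)])
qed

lemma udist_nonneg: "f \<in> Fspace \<Longrightarrow> g \<in> Fspace \<Longrightarrow> 0 \<le> udist g f"
  using abs_diff_le_udist[of f g 0] by (smt (verit) atLeastAtMost_iff)

lemma bdd_below_phi_quotients:
  assumes "h \<in> Fspace" "a \<in> {0..1}"
  shows "bdd_below ((\<lambda>x. (1 - h (x * a)) / (1 - x)) ` {0..<1})"
proof (rule bdd_belowI2[where m = 0])
  fix x :: real assume "x \<in> {0..<1}"
  then show "0 \<le> (1 - h (x * a)) / (1 - x)"
    using Fspace_unit_interval(2)[OF assms(1) mult_in_unit_interval(1)[OF assms(2)]] by auto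
qed

lemma phi_le_one:
  assumes "h \<in> Fspace" "a \<in> {0..1}"
  shows "phi a h \<le> 1"
proof -
  have "phi a h \<le> (1 - h (0 * a)) / (1 - 0)"
    unfolding phi_def by (rule cINF_lower[OF bdd_below_phi_quotients[OF assms]]) auto
  also have "\<dots> \<le> 1"
    using Fspace_unit_interval(1)[OF assms(1), of 0] by auto
  finally show ?thesis .
qed

lemma phi_numerator_ge:
  assumes "f \<in> Fspace" "a \<in> {0..1}" "x \<in> {0..<1}"
  shows "1 - f a \<le> 1 - f (x * a)"
  using mono_onD[of "{0..1}" f] assms mult_in_unit_interval[OF assms(2,3)]
  by (auto simp: Fspace_def)

lemma phi_lower_bound:
  assumes h\<^sub>2: "h\<^sub>2 \<in> Fspace" and a: "a \<in> {0..1}"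
    and d: "\<And>y. y \<in> {0..1} \<Longrightarrow> \<bar>h\<^sub>1 y - h\<^sub>2 y\<bar> \<le> d"
    and c: "c > 0" "\<And>x. x \<in> {0..<1} \<Longrightarrow> c \<le> 1 - h\<^sub>1 (x * a)"
  shows "phi a h\<^sub>2 - d / c \<le> phi a h\<^sub>1"
proof -
  have d_nonneg: "0 \<le> d" using d[of 0] by auto
  have "phi a h\<^sub>2 - d / c \<le> (1 - h\<^sub>1 (x * a)) / (1 - x)" if x: "x \<in> {0..<1}" for x
  proof (cases "1 - x \<le> c")
    case True
    have pos: "0 < 1 - x" using x by auto
    have "1 \<le> c / (1 - x)" using True pos by simp
    also have "\<dots> \<le> (1 - h\<^sub>1 (x * a)) / (1 - x)"
      using c(2)[OF x] pos by (simp add: divide_right_mono)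
    finally show ?thesis
      using phi_le_one[OF h\<^sub>2 a] d_nonneg c(1) by (smt (verit) divide_nonneg_pos)
  next
    case False
    have pos: "0 < 1 - x" using x by auto
    have "phi a h\<^sub>2 \<le> (1 - h\<^sub>2 (x * a)) / (1 - x)"
      unfolding phi_def by (rule cINF_lower[OF bdd_below_phi_quotients[OF h\<^sub>2 a] x])
    also have "\<dots> = (1 - h\<^sub>1 (x * a)) / (1 - x) + (h\<^sub>1 (x * a) - h\<^sub>2 (x * a)) / (1 - x)"
      using pos by (simp add: field_simps)
    also have "\<dots> \<le> (1 - h\<^sub>1 (x * a)) / (1 - x) + d / (1 - x)"
      using d[OF mult_in_unit_interval(1)[OF a x]] pos by (simp add: divide_right_mono)
    also have "\<dots> \<le> (1 - h\<^sub>1 (x * a)) / (1 - x) + d / c"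
      using False d_nonneg c(1) by (simp add: divide_left_mono)
    finally show ?thesis by simp
  qed
  then show ?thesis
    unfolding phi_def[of a h\<^sub>1] by (intro cINF_greatest) auto
qed

lemma phi_lipschitz_near:
  assumes f: "f \<in> Fspace" and g: "g \<in> Fspace" and a: "a \<in> {0..1}"
    and close: "udist g f < (1 - f a) / 2"
  shows "\<bar>phi a g - phi a f\<bar> \<le> 2 * udist g f / (1 - f a)"
proof -
  define c where "c = 1 - f a"
  define d where "d = udist g f"
  have "0 \<le> d" using udist_nonneg[OF f g] by (simp add: d_def)
  then have c: "0 < c" using close by (simp add: c_def d_def)
  have gf: "\<bar>g y - f y\<bar> \<le> d" and fg: "\<bar>f y - g y\<bar> \<le> d" if "y \<in> {0..1}" for y
    using abs_diff_le_udist[OF f g that] by (auto simp: d_def abs_minus_commute)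
  have f_num: "c \<le> 1 - f (x * a)" if "x \<in> {0..<1}" for x
    using phi_numerator_ge[OF f a that] by (simp add: c_def)
  have g_num: "c / 2 \<le> 1 - g (x * a)" if "x \<in> {0..<1}" for x
    using f_num[OF that] gf[OF mult_in_unit_interval(1)[OF a that]] close
    by (simp add: c_def d_def abs_le_iff)
  have "phi a f - d / (c / 2) \<le> phi a g"
    by (rule phi_lower_bound[OF f a gf]) (use c g_num in auto)
  moreover have "phi a g - d / c \<le> phi a f"
    by (rule phi_lower_bound[OF g a fg c f_num])
  moreover have "d / c \<le> d / (c / 2)"
    using \<open>0 \<le> d\<close> c by (simp add: divide_right_mono)
  ultimately show ?thesis by (simp add: c_def d_def abs_le_iff)
qed

theorem lemma7:
  fixes \<alpha> :: real and f :: "real \<Rightarrow> real"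
  assumes "\<alpha> \<in> {0..1}" and "f \<in> Fspace" and "f \<alpha> < 1"
  shows "\<forall>\<epsilon>>0. \<exists>\<delta>>0. \<forall>g\<in>Fspace. udist g f < \<delta> \<longrightarrow> \<bar>phi \<alpha> g - phi \<alpha> f\<bar> < \<epsilon>"
proof (intro allI impI)
  fix \<epsilon> :: real assume "\<epsilon> > 0"
  define c where "c = 1 - f \<alpha>"
  have "c > 0" using assms(3) by (simp add: c_def)
  show "\<exists>\<delta>>0. \<forall>g\<in>Fspace. udist g f < \<delta> \<longrightarrow> \<bar>phi \<alpha> g - phi \<alpha> f\<bar> < \<epsilon>"
  proof (intro exI[of _ "min (c / 2) (\<epsilon> * c / 2)"] conjI ballI impI)
    show "0 < min (c / 2) (\<epsilon> * c / 2)" using \<open>c > 0\<close> \<open>\<epsilon> > 0\<close> by simp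
    fix g assume g: "g \<in> Fspace" and close: "udist g f < min (c / 2) (\<epsilon> * c / 2)"
    have "\<bar>phi \<alpha> g - phi \<alpha> f\<bar> \<le> 2 * udist g f / c"
      using phi_lipschitz_near[OF assms(2) g assms(1)] close by (simp add: c_def)
    also have "\<dots> < \<epsilon>"
      using close \<open>c > 0\<close> by (simp add: field_simps)
    finally show "\<bar>phi \<alpha> g - phi \<alpha> f\<bar> < \<epsilon>" .
  qed
qed

end
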